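(* For every DBI normal formula $\varphi$, the pointed action model $(\mathcal{U}_\varphi,0)$ (more precisely, its pointed frame $(\langle E^\varphi,Q^\varphi\rangle,0)$) is privatized with respect to $\varphi$.
   Context: Agents $\mathcal{A}=\{1,\dots,n\}$, $n>1$; language $\mathcal{L}$: $\varphi ::= p \mid \neg\varphi \mid (\varphi\wedge\varphi)\mid B_i\varphi$, $\top$ the usual tautology. An action model $\mathcal{U}=\langle E,Q,\mathsf{pre}\rangle$ has a nonempty set $E$ of events, relations $Q_i\subseteq E\times E$, $\mathsf{pre}:E\to\mathcal{L}$. Target agents: $\mathsf{ta}(p)=\varnothing$, $\mathsf{ta}(\neg\phi)=\mathsf{ta}(\phi)$, $\mathsf{ta}(\phi\wedge\psi)=\mathsf{ta}(\phi)\cup\mathsf{ta}(\psi)$, $\mathsf{ta}(B_i\phi)=\{i\}$. DBI formulas: $\varphi ::= B_i\xi \mid B_i(\xi\wedge\varphi)\mid(\varphi\wedge\varphi)\mid B_i\varphi$, $\xi$ purely propositional. DBI normal: $B_i\xi$ always; $B_i\varphi$, $B_i(\xi\wedge\varphi)$ iff $\varphi$ DBI normal and $i\notin\mathsf{ta}(\varphi)$; $\varphi\wedge\psi$ iff both DBI normal and $\mathsf{ta}(\varphi)\cap\mathsf{ta}(\psi)=\varnothing$. Action model $\mathcal{U}_\varphi=\langle E^\varphi,Q^\varphi,\mathsf{pre}^\varphi\rangle$ for DBI normal $\varphi$, recursively; always $E^\varphi=\{0,-1\}\sqcup D^\varphi$, $\varnothing\ne D^\varphi\subseteq\{1,2,\dots\}$,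 $\mathsf{pre}^\varphi(0)=\mathsf{pre}^\varphi(-1)=\top$; $\underline{Q}_j:=Q_j\cap((E\setminus\{0\})\times(E\setminus\{0\}))$. (1) $\varphi=B_i\xi$: $D=\{m\}$, $\mathsf{pre}(m)=\xi$, $Q_j=\{(0,-1),(m,-1),(-1,-1)\}$ ($j\ne i$), $Q_i=\{(0,m),(m,m),(-1,-1)\}$. (2) $\varphi=B_i\psi$: fresh $m\ge1$, $m\notin D^\psi$; $D^\varphi=D^\psi\sqcup\{m\}$; $\mathsf{pre}^\varphi$ extends $\mathsf{pre}^\psi$ with $\mathsf{pre}^\varphi(m)=\top$; $Q^\varphi_j=\underline{Q}^\psi_j\cup\{(0,-1)\}\cup\{(m,k)\mid(0,k)\in Q^\psi_j\}$ ($j\ne i$); $Q^\varphi_i=\underline{Q}^\psi_i\cup\{(0,m),(m,m)\}$. (3) $\varphi=B_i(\xi\wedge\psi)$: as (2) but $\mathsf{pre}^\varphi(m)=\xi$. (4) $\varphi=\psi\wedge\theta$: with $D^\psi\cap D^\theta=\varnothing$, $D^\varphi=D^\psi\sqcup D^\theta$, $\mathsf{pre}^\varphi=\mathsf{pre}^\psi\cup\mathsf{pre}^\theta$, $Q^\varphi_j=\underline{Q}^\psi_j\cup\underline{Q}^\theta_j\cup\{(0,k)\mid(0,k)\in Q^\psi_j\cup Q^\theta_j, k\in D^\psi\sqcup D^\theta\}\cup\{(0,-1)\mid\text{no such }k\text{ exists}\}$. Modal syntactic tree $\mathcal{T}_\varphi$ of a DBI formula (an out-tree with unlabeled root, other nodes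 labeled by agents/modalities): $\mathcal{T}_{B_i\xi}$ is a root with one child labeled $B_i$; $\mathcal{T}_{B_i\psi}=\mathcal{T}_{B_i(\xi\wedge\psi)}$ is obtained by labeling the root of $\mathcal{T}_\psi$ with $B_i$ and making it the only child of a new root; $\mathcal{T}_{\psi\wedge\theta}$ is the disjoint union of $\mathcal{T}_\psi$ and $\mathcal{T}_\theta$ with their roots identified. $RootP(\varphi)$ is the set of paths in $\mathcal{T}_\varphi$ starting at the root (of any length $l\ge0$); the agent sequence $\mathsf{agSeq}(\sigma)=(i_1,\dots,i_l)$ of such a path lists the agents labeling its non-root nodes in order (empty for the empty path). For a frame $\mathcal{F}=\langle W,R\rangle$, $w\in W$ and an agent sequence $(i_1,\dots,i_l)$, the cluster is $C^{i_1,\dots,i_l}_{\mathcal{F},w}=\{u\in W\mid \exists u_2,\dots,u_l\in W:\ wR_{i_1}u_2R_{i_2}\cdots u_lR_{i_l}u\}$, with $C^\varepsilon_{\mathcal{F},w}=\{w\}$. $\mathcal{A}^l_{\mathrm{nsr}}$ is the set of agent sequences of length $l$ with no two successive equal agents. $(\mathcal{F},w)$ is privatized w.r.t. $\varphi$ iff for every $\sigma\in RootP(\varphi)$: $C^{\mathsf{agSeq}(\sigma)}_{\mathcal{F},w}\neq\varnothing$ and for every $s\in\bigcup_{l\ge0}\mathcal{A}^l_{\mathrm{nsr}}\setminus\{\mathsf{agSeq}(\sigma)\}$, $C^{\mathsf{agSeq}(\sigma)}_{\mathcal{F},w}\cap C^{s}_{\mathcal{F},w}=\varnothing$. *)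

theory Defs
  imports Main
begin

datatype 'p fm = Prop 'p | Neg "'p fm" | Conj "'p fm" "'p fm" | Bel nat "'p fm"

text \<open>The usual tautology (its atom is irrelevant; we fix an arbitrary one).\<close>
definition fm_top :: "'p fm" where
  "fm_top = Neg (Conj (Prop undefined) (Neg (Prop undefined)))"

primrec agents_of :: "'p fm \<Rightarrow> nat set" where
  "agents_of (Prop p) = {}"
| "agents_of (Neg a) = agents_of a"
| "agents_of (Conj a b) = agents_of a \<union> agents_of b"
| "agents_of (Bel i a) = insert i (agents_of a)"

primrec propositional :: "'p fm \<Rightarrow> bool" where
  "propositional (Prop p) = True"
| "propositional (Neg a) = propositional a"
| "propositional (Conj a b) = (propositional a \<and> propositional b)"
| "propositional (Bel i a) = False"

primrec ta :: "'p fm \<Rightarrow> nat set" where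
  "ta (Prop p) = {}"
| "ta (Neg a) = ta a"
| "ta (Conj a b) = ta a \<union> ta b"
| "ta (Bel i a) = {i}"

inductive dbi_normal :: "'p fm \<Rightarrow> bool" where
  bel_prop: "propositional \<xi> \<Longrightarrow> dbi_normal (Bel i \<xi>)"
| bel: "dbi_normal \<phi> \<Longrightarrow> i \<notin> ta \<phi> \<Longrightarrow> dbi_normal (Bel i \<phi>)"
| bel_conj: "propositional \<xi> \<Longrightarrow> dbi_normal \<phi> \<Longrightarrow> i \<notin> ta \<phi>
      \<Longrightarrow> dbi_normal (Bel i (Conj \<xi> \<phi>))"
| conj: "dbi_normal \<phi> \<Longrightarrow> dbi_normal \<psi> \<Longrightarrow> ta \<phi> \<inter> ta \<psi> = {}
      \<Longrightarrow> dbi_normal (Conj \<phi> \<psi>)"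

text \<open>Events are integers; the event set is {0,-1} plus D with D a nonempty set
of positive integers. An action model is given by (D, Q, pre) with
E = {0,-1} \<union> D.  The relation below describes all admissible outcomes
of the recursive construction (for every choice of fresh events).\<close>

definition under :: "int set \<Rightarrow> (int \<times> int) set \<Rightarrow> (int \<times> int) set" where
  "under E R = R \<inter> ((E - {0}) \<times> (E - {0}))"

definition evs :: "int set \<Rightarrow> int set" where
  "evs D = {0, -1} \<union> D"

inductive U_model :: "'p fm \<Rightarrow> int set \<Rightarrow> (nat \<Rightarrow> (int \<times> int) set) \<Rightarrow> (int \<Rightarrow> 'p fm) \<Rightarrow> bool"
where
  base: "propositional \<xi> \<Longrightarrow> (m::int) \<ge> 1 \<Longrightarrow>
     U_model (Bel i \<xi>) {m}
       (\<lambda>j. if j = i then {(0,m),(m,m),(-1,-1)} else {(0,-1),(m,-1),(-1,-1)})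
       ((\<lambda>_. fm_top)(m := \<xi>))"
| bel: "U_model \<psi> D Q pre \<Longrightarrow> (m::int) \<ge> 1 \<Longrightarrow> m \<notin> D \<Longrightarrow>
     U_model (Bel i \<psi>) (insert m D)
       (\<lambda>j. if j = i then under (evs D) (Q j) \<union> {(0,m),(m,m)}
            else under (evs D) (Q j) \<union> {(0,-1)} \<union> {(m,k) | k. (0,k) \<in> Q j})
       (pre(m := fm_top))"
| bel_conj: "propositional \<xi> \<Longrightarrow> U_model \<psi> D Q pre \<Longrightarrow> (m::int) \<ge> 1 \<Longrightarrow> m \<notin> D \<Longrightarrow>
     U_model (Bel i (Conj \<xi> \<psi>)) (insert m D)
       (\<lambda>j. if j = i then under (evs D) (Q j) \<union> {(0,m),(m,m)}
            else under (evs D) (Q j) \<union> {(0,-1)} \<union> {(m,k) | k. (0,k) \<in> Q j})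
       (pre(m := \<xi>))"
| conj: "U_model \<psi> D1 Q1 pre1 \<Longrightarrow> U_model \<theta> D2 Q2 pre2 \<Longrightarrow> D1 \<inter> D2 = {} \<Longrightarrow>
     U_model (Conj \<psi> \<theta>) (D1 \<union> D2)
       (\<lambda>j. under (evs D1) (Q1 j) \<union> under (evs D2) (Q2 j)
            \<union> {(0,k) | k. (0,k) \<in> Q1 j \<union> Q2 j \<and> k \<in> D1 \<union> D2}
            \<union> {(0,-1) | _::unit. \<not> (\<exists>k. (0,k) \<in> Q1 j \<union> Q2 j \<and> k \<in> D1 \<union> D2)})
       (\<lambda>k. if k \<in> D1 then pre1 k else pre2 k)"

text \<open>Non-root nodes of the modal syntactic tree, labelled by agents; the
(unlabelled) root is represented by the list of its children.\<close>
datatype ltree = Node (label: nat) (children: "ltree list")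

text \<open>Modal syntactic tree (children of the root). On DBI formulas this agrees
with the paper's definition: propositional subformulas contribute nothing.\<close>
primrec mtree :: "'p fm \<Rightarrow> ltree list" where
  "mtree (Prop p) = []"
| "mtree (Neg a) = mtree a"
| "mtree (Conj a b) = mtree a @ mtree b"
| "mtree (Bel i a) = [Node i (mtree a)]"

text \<open>Paths starting at the root, given as the list of non-root nodes visited.\<close>
inductive rootpath :: "ltree list \<Rightarrow> ltree list \<Rightarrow> bool" where
  nil: "rootpath F []"
| cons: "t \<in> set F \<Longrightarrow> rootpath (children t) p \<Longrightarrow> rootpath F (t # p)"

definition RootP :: "'p fm \<Rightarrow> ltree list set" where
  "RootP \<phi> = {\<sigma>. rootpath (mtree \<phi>) \<sigma>}"

definition agSeq :: "ltree list \<Rightarrow> nat list" where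
  "agSeq \<sigma> = map label \<sigma>"

primrec reach :: "'w set \<Rightarrow> (nat \<Rightarrow> ('w \<times> 'w) set) \<Rightarrow> 'w \<Rightarrow> nat list \<Rightarrow> 'w \<Rightarrow> bool" where
  "reach W R w [] u = (u = w)"
| "reach W R w (i # s) u = (\<exists>v \<in> W. (w, v) \<in> R i \<and> reach W R v s u)"

definition cluster :: "'w set \<Rightarrow> (nat \<Rightarrow> ('w \<times> 'w) set) \<Rightarrow> 'w \<Rightarrow> nat list \<Rightarrow> 'w set" where
  "cluster W R w s = {u \<in> W. reach W R w s u}"

definition nsr :: "nat \<Rightarrow> nat list \<Rightarrow> bool" where
  "nsr n s \<longleftrightarrow> set s \<subseteq> {1..n} \<and> (\<forall>k. Suc k < length s \<longrightarrow> s ! k \<noteq> s ! Suc k)"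

definition privatized :: "nat \<Rightarrow> 'w set \<Rightarrow> (nat \<Rightarrow> ('w \<times> 'w) set) \<Rightarrow> 'w \<Rightarrow> 'p fm \<Rightarrow> bool" where
  "privatized n W R w \<phi> \<longleftrightarrow>
     (\<forall>\<sigma> \<in> RootP \<phi>. cluster W R w (agSeq \<sigma>) \<noteq> {} \<and>
        (\<forall>s. nsr n s \<and> s \<noteq> agSeq \<sigma> \<longrightarrow> cluster W R w (agSeq \<sigma>) \<inter> cluster W R w s = {}))"

end

theory Submission
  imports Defs
begin

text \<open>Write 0 for the root event and -1 for the sink of \<open>U\<^sub>\<phi>\<close>. Along the construction of
  \<open>U\<^sub>\<phi>\<close> one maintains that every agent outside \<open>ta \<phi>\<close> leads from 0 straight into the sink,
  that every event other than -1 is reached from 0 along at most one agent sequence without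
  successive repetitions, and that every root path of the modal syntactic tree is realised by such
  a sequence ending outside the sink. For \<open>B\<^sub>i \<psi>\<close> this holds because the fresh event is the only
  \<open>i\<close>-successor of 0 and copies the other out-edges of the old root, which a repetition-free
  sequence cannot use after an \<open>i\<close>-step; for \<open>\<psi> \<and> \<theta>\<close> the disjoint sets of target agents send the
  first step into the right conjunct. Privatization follows: a common event of two clusters would
  be reached along two different repetition-free sequences.\<close>

lemma nsr_distinct_adj: "nsr n s \<Longrightarrow> distinct_adj s"
  by (simp add: nsr_def distinct_adj_conv_nth)

lemma reach_in: "w \<in> W \<Longrightarrow> reach W R w s u \<Longrightarrow> u \<in> W"
  by (induction s arbitrary: w) auto

lemma rootpath_Nil_iff: "rootpath [] \<sigma> \<longleftrightarrow> \<sigma> = []"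
  by (auto elim: rootpath.cases intro: rootpath.intros)

lemma rootpath_Cons_iff: "rootpath F (t # p) \<longleftrightarrow> t \<in> set F \<and> rootpath (children t) p"
  by (auto elim: rootpath.cases intro: rootpath.intros)

lemma rootpath_singleton_iff:
  "rootpath [t] \<sigma> \<longleftrightarrow> \<sigma> = [] \<or> (\<exists>p. \<sigma> = t # p \<and> rootpath (children t) p)"
  by (cases \<sigma>) (auto simp: rootpath_Cons_iff intro: rootpath.intros)

lemma rootpath_append_iff: "rootpath (F @ G) \<sigma> \<longleftrightarrow> rootpath F \<sigma> \<or> rootpath G \<sigma>"
  by (cases \<sigma>) (auto simp: rootpath_Cons_iff intro: rootpath.intros)

lemma agSeq_simps [simp]: "agSeq [] = []" "agSeq (t # p) = label t # agSeq p"
  by (simp_all add: agSeq_def)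

lemma label_mtree: "label ` set (mtree \<phi>) = ta \<phi>"
  by (induction \<phi>) auto

lemma rootpath_mtree_hd: "rootpath (mtree \<phi>) \<sigma> \<Longrightarrow> agSeq \<sigma> = [] \<or> hd (agSeq \<sigma>) \<in> ta \<phi>"
  by (cases \<sigma>) (auto simp: rootpath_Cons_iff simp flip: label_mtree)

lemma propositional_mtree: "propositional \<xi> \<Longrightarrow> mtree \<xi> = []"
  and propositional_ta: "propositional \<xi> \<Longrightarrow> ta \<xi> = {}"
  by (induction \<xi>) auto

lemma dbi_normal_not_propositional: "dbi_normal \<phi> \<Longrightarrow> \<not> propositional \<phi>"
  by (induction rule: dbi_normal.induct) auto

lemma U_model_not_propositional: "U_model \<phi> D Q pre \<Longrightarrow> \<not> propositional \<phi>"
  by (induction rule: U_model.induct) auto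

lemma dbi_normal_rootpath_distinct_adj:
  "dbi_normal \<phi> \<Longrightarrow> rootpath (mtree \<phi>) \<sigma> \<Longrightarrow> distinct_adj (agSeq \<sigma>)"
proof (induction arbitrary: \<sigma> rule: dbi_normal.induct)
  case (bel_prop \<xi> i)
  then show ?case by (auto simp: rootpath_singleton_iff propositional_mtree rootpath_Nil_iff)
next
  case (bel \<phi> i)
  then show ?case
    by (auto simp: rootpath_singleton_iff distinct_adj_Cons dest: rootpath_mtree_hd)
next
  case (bel_conj \<xi> \<phi> i)
  then show ?case
    by (auto simp: rootpath_singleton_iff distinct_adj_Cons propositional_mtree propositional_ta
        dest: rootpath_mtree_hd)
next
  case (conj \<phi> \<psi>)
  then show ?case by (auto simp: rootpath_append_iff)
qed

locale U_shape =
  fixes T :: "nat set" and D :: "int set" and Q :: "nat \<Rightarrow> (int \<times> int) set"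
  assumes positive: "x \<in> D \<Longrightarrow> 1 \<le> x"
    and edges_within: "(x, y) \<in> Q j \<Longrightarrow> x \<in> evs D \<and> y \<in> evs D"
    and no_edge_into_root: "(x, 0) \<notin> Q j"
    and sink_iff: "(-1, y) \<in> Q j \<longleftrightarrow> y = -1"
    and target_succ_ex: "j \<in> T \<Longrightarrow> \<exists>k. (0, k) \<in> Q j"
    and target_succ: "j \<in> T \<Longrightarrow> (0, k) \<in> Q j \<Longrightarrow> k \<in> D"
    and nontarget_succ_iff: "j \<notin> T \<Longrightarrow> (0, k) \<in> Q j \<longleftrightarrow> k = -1"
begin

lemma sink_notin_D: "-1 \<notin> D"
  using positive by force

lemma succ_in_evs: "(x, v) \<in> Q j \<Longrightarrow> v \<in> evs D - {0}"
  using edges_within no_edge_into_root by blast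

lemma mem_under_iff: "(x, y) \<in> under (evs D) (Q j) \<longleftrightarrow> (x, y) \<in> Q j \<and> x \<noteq> 0"
  using edges_within no_edge_into_root by (auto simp: under_def)

lemma reach_in_evs: "reach (evs D) Q 0 s u \<Longrightarrow> u \<in> evs D"
  using reach_in[of 0 "evs D"] by (simp add: evs_def)

lemma reach_from_sink: "reach (evs D) Q (-1) s u \<Longrightarrow> u = -1"
  by (induction s) (auto simp: sink_iff)

lemma reach_nontarget: "j \<notin> T \<Longrightarrow> reach (evs D) Q 0 (j # s) u \<Longrightarrow> u = -1"
  using nontarget_succ_iff reach_from_sink by auto

lemma reach_Cons_not_root: "reach (evs D) Q w (j # s) u \<Longrightarrow> u \<noteq> 0"
  by (induction s arbitrary: w j) (auto simp: no_edge_into_root)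

lemma reach_root_iff: "reach (evs D) Q 0 s 0 \<longleftrightarrow> s = []"
  by (metis neq_Nil_conv reach.simps(1) reach_Cons_not_root)

lemma reach_extension:
  assumes "evs D \<subseteq> W'"
    and agree: "\<And>j x y. x \<in> evs D - {0} \<Longrightarrow> (x, y) \<in> Q' j \<longleftrightarrow> (x, y) \<in> Q j"
    and "x \<in> evs D - {0}"
  shows "reach W' Q' x s u \<longleftrightarrow> reach (evs D) Q x s u"
  using \<open>x \<in> evs D - {0}\<close>
proof (induction s arbitrary: x)
  case (Cons j s)
  with agree succ_in_evs \<open>evs D \<subseteq> W'\<close> show ?case by auto
qed simp

lemma reach_extension_Cons:
  assumes "evs D \<subseteq> W'"
    and agree: "\<And>j x y. x \<in> evs D - {0} \<Longrightarrow> (x, y) \<in> Q' j \<longleftrightarrow> (x, y) \<in> Q j"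
    and succ: "\<And>v. (w, v) \<in> Q' j \<longleftrightarrow> (0, v) \<in> Q j"
  shows "reach W' Q' w (j # s) u \<longleftrightarrow> reach (evs D) Q 0 (j # s) u"
  using succ_in_evs reach_extension[OF assms(1,2)] succ \<open>evs D \<subseteq> W'\<close> by auto

end

text \<open>Uniqueness is required for all pairs of repetition-free sequences, not only against root
  paths as in \<open>privatized\<close>: this is what survives the induction.\<close>

locale privatizing_model = U_shape "ta \<phi>" D Q
  for \<phi> :: "'p fm" and D Q +
  assumes rootpath_reach: "rootpath (mtree \<phi>) \<sigma> \<Longrightarrow> \<exists>u. reach (evs D) Q 0 (agSeq \<sigma>) u"
    and rootpath_avoids_sink:
      "rootpath (mtree \<phi>) \<sigma> \<Longrightarrow> reach (evs D) Q 0 (agSeq \<sigma>) u \<Longrightarrow> u \<noteq> -1"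
    and distinct_adj_unique: "distinct_adj s \<Longrightarrow> distinct_adj t \<Longrightarrow>
      reach (evs D) Q 0 s u \<Longrightarrow> reach (evs D) Q 0 t u \<Longrightarrow> u \<noteq> -1 \<Longrightarrow> s = t"

lemma privatizing_model_cong:
  "ta \<phi> = ta \<phi>' \<Longrightarrow> mtree \<phi> = mtree \<phi>' \<Longrightarrow> privatizing_model \<phi> D Q = privatizing_model \<phi>' D Q"
  by (simp add: privatizing_model_def privatizing_model_axioms_def)

definition sink_rel :: "nat \<Rightarrow> (int \<times> int) set" where
  "sink_rel = (\<lambda>_. {(0, -1), (-1, -1)})"

lemma privatizing_model_propositional:
  assumes "propositional \<xi>"
  shows "privatizing_model \<xi> {} sink_rel"
proof -
  have ta: "ta \<xi> = {}" and mtree: "mtree \<xi> = []"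
    using assms by (simp_all add: propositional_ta propositional_mtree)
  interpret U_shape "{}" "{}" sink_rel
    by unfold_locales (auto simp: sink_rel_def evs_def)
  show ?thesis
  proof unfold_locales
    fix s t :: "nat list" and u
    assume "reach (evs {}) sink_rel 0 s u" "reach (evs {}) sink_rel 0 t u" "u \<noteq> -1"
    then show "s = t"
      by (metis empty_iff neq_Nil_conv reach_nontarget)
  qed (auto simp: ta mtree rootpath_Nil_iff sink_rel_def evs_def)
qed

definition bel_rel :: "nat \<Rightarrow> int set \<Rightarrow> (nat \<Rightarrow> (int \<times> int) set) \<Rightarrow> int \<Rightarrow> nat \<Rightarrow> (int \<times> int) set"
  where "bel_rel i D Q m = (\<lambda>j. if j = i then under (evs D) (Q j) \<union> {(0, m), (m, m)}
    else under (evs D) (Q j) \<union> {(0, -1)} \<union> {(m, k) | k. (0, k) \<in> Q j})"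

locale bel_extension = privatizing_model \<psi> D Q for \<psi> :: "'p fm" and D Q +
  fixes i :: nat and m :: int
  assumes not_target: "i \<notin> ta \<psi>" and fresh_pos: "1 \<le> m" and fresh: "m \<notin> D"
begin

abbreviation "Q' \<equiv> bel_rel i D Q m"
abbreviation "W' \<equiv> evs (insert m D)"

lemma fresh_notin_evs: "m \<notin> evs D"
  using fresh fresh_pos by (auto simp: evs_def)

lemma mem_bel_rel_iff:
  "(x, y) \<in> Q' j \<longleftrightarrow> x \<noteq> 0 \<and> (x, y) \<in> Q j
     \<or> j = i \<and> (x, y) \<in> {(0, m), (m, m)}
     \<or> j \<noteq> i \<and> ((x, y) = (0, -1) \<or> x = m \<and> (0, y) \<in> Q j)"
  by (auto simp: bel_rel_def mem_under_iff)

lemma bel_shape: "U_shape {i} (insert m D) Q'"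
proof unfold_locales
  fix j x y
  show "(x, y) \<in> Q' j \<Longrightarrow> x \<in> W' \<and> y \<in> W'"
    using edges_within by (auto simp: mem_bel_rel_iff evs_def)
  show "(-1, y) \<in> Q' j \<longleftrightarrow> y = -1"
    using sink_iff fresh_pos by (auto simp: mem_bel_rel_iff)
qed (use positive fresh_pos no_edge_into_root in \<open>auto simp: mem_bel_rel_iff\<close>)

sublocale extended: U_shape "{i}" "insert m D" Q'
  by (fact bel_shape)

lemma bel_rel_agree: "x \<in> evs D - {0} \<Longrightarrow> (x, y) \<in> Q' j \<longleftrightarrow> (x, y) \<in> Q j"
  using fresh_notin_evs by (auto simp: mem_bel_rel_iff)

lemma reach_bel_fresh:
  assumes "j \<noteq> i"
  shows "reach W' Q' m (j # s) u \<longleftrightarrow> reach (evs D) Q 0 (j # s) u"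
proof (rule reach_extension_Cons)
  show "(m, v) \<in> Q' j \<longleftrightarrow> (0, v) \<in> Q j" for v
    using assms fresh_notin_evs edges_within fresh_pos by (auto simp: mem_bel_rel_iff)
qed (auto simp: evs_def bel_rel_agree)

lemma reach_bel_root:
  assumes "s = [] \<or> hd s \<noteq> i"
  shows "reach W' Q' 0 (i # s) u \<longleftrightarrow> (if s = [] then u = m else reach (evs D) Q 0 s u)"
proof -
  have "reach W' Q' 0 (i # s) u \<longleftrightarrow> reach W' Q' m s u"
    using fresh_pos by (auto simp: mem_bel_rel_iff evs_def)
  with assms reach_bel_fresh show ?thesis
    by (cases s) auto
qed

lemma reach_bel_distinct_adj_cases:
  assumes "distinct_adj s" and "reach W' Q' 0 s u" and "u \<noteq> -1"
  obtains "s = []" and "u = 0"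
  | s' where "s = i # s'" and "s' = [] \<longleftrightarrow> u = m" and "s' \<noteq> [] \<Longrightarrow> reach (evs D) Q 0 s' u"
    and "distinct_adj s'"
proof (cases s)
  case Nil
  with assms that(1) show ?thesis by simp
next
  case (Cons j s')
  with assms extended.reach_nontarget have "j = i" by blast
  with Cons assms(1) have "s' = [] \<or> hd s' \<noteq> i" and "distinct_adj s'"
    by (auto simp: distinct_adj_Cons)
  with Cons \<open>j = i\<close> assms(2) reach_bel_root
  have "if s' = [] then u = m else reach (evs D) Q 0 s' u"
    by simp
  with Cons \<open>j = i\<close> \<open>distinct_adj s'\<close> reach_in_evs fresh_notin_evs that(2) show ?thesis
    by (metis (full_types))
qed

lemma bel_privatizing: "privatizing_model (Bel i \<psi>) (insert m D) Q'"
proof (intro privatizing_model.intro privatizing_model_axioms.intro)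
  show "U_shape (ta (Bel i \<psi>)) (insert m D) Q'"
    using bel_shape by simp
next
  fix \<sigma>
  assume "rootpath (mtree (Bel i \<psi>)) \<sigma>"
  then consider "\<sigma> = []" | p where "\<sigma> = Node i (mtree \<psi>) # p" and "rootpath (mtree \<psi>) p"
    by (auto simp: rootpath_singleton_iff)
  then have "(\<exists>u. reach W' Q' 0 (agSeq \<sigma>) u) \<and> (\<forall>u. reach W' Q' 0 (agSeq \<sigma>) u \<longrightarrow> u \<noteq> -1)"
  proof cases
    case 2
    then have "agSeq p = [] \<or> hd (agSeq p) \<noteq> i"
      using rootpath_mtree_hd not_target by fastforce
    with 2 have "reach W' Q' 0 (agSeq \<sigma>) u \<longleftrightarrow>
        (if agSeq p = [] then u = m else reach (evs D) Q 0 (agSeq p) u)" for u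
      using reach_bel_root by simp
    with rootpath_reach[OF 2(2)] rootpath_avoids_sink[OF 2(2)] fresh_pos show ?thesis
      by auto
  qed simp
  then show "\<exists>u. reach W' Q' 0 (agSeq \<sigma>) u" and "\<And>u. reach W' Q' 0 (agSeq \<sigma>) u \<Longrightarrow> u \<noteq> -1"
    by blast+
next
  fix s t u
  assume s: "distinct_adj s" "reach W' Q' 0 s u" and t: "distinct_adj t" "reach W' Q' 0 t u"
    and "u \<noteq> -1"
  from s \<open>u \<noteq> -1\<close> show "s = t"
  proof (cases rule: reach_bel_distinct_adj_cases)
    case 1
    with t show ?thesis by (simp add: extended.reach_root_iff)
  next
    case (2 s')
    from t \<open>u \<noteq> -1\<close> show ?thesis
    proof (cases rule: reach_bel_distinct_adj_cases)
      case 1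
      with s show ?thesis by (simp add: extended.reach_root_iff)
    next
      case (2 t')
      with \<open>s = i # s'\<close> \<open>s' = [] \<longleftrightarrow> u = m\<close> \<open>s' \<noteq> [] \<Longrightarrow> reach (evs D) Q 0 s' u\<close>
        \<open>distinct_adj s'\<close> \<open>u \<noteq> -1\<close> distinct_adj_unique
      show ?thesis by metis
    qed
  qed
qed

end

definition conj_rel :: "int set \<Rightarrow> (nat \<Rightarrow> (int \<times> int) set) \<Rightarrow> int set \<Rightarrow>
    (nat \<Rightarrow> (int \<times> int) set) \<Rightarrow> nat \<Rightarrow> (int \<times> int) set" where
  "conj_rel D1 Q1 D2 Q2 = (\<lambda>j. under (evs D1) (Q1 j) \<union> under (evs D2) (Q2 j)
    \<union> {(0, k) | k. (0, k) \<in> Q1 j \<union> Q2 j \<and> k \<in> D1 \<union> D2}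
    \<union> {(0, -1) | _::unit. \<not> (\<exists>k. (0, k) \<in> Q1 j \<union> Q2 j \<and> k \<in> D1 \<union> D2)})"

lemma conj_rel_commute: "conj_rel D1 Q1 D2 Q2 = conj_rel D2 Q2 D1 Q1"
  by (auto simp: conj_rel_def fun_eq_iff)

locale conj_extension = M1: U_shape T1 D1 Q1 + M2: U_shape T2 D2 Q2 for T1 D1 Q1 T2 D2 Q2 +
  assumes disjoint_events: "D1 \<inter> D2 = {}" and disjoint_targets: "T1 \<inter> T2 = {}"
begin

abbreviation "Q' \<equiv> conj_rel D1 Q1 D2 Q2"
abbreviation "W' \<equiv> evs (D1 \<union> D2)"

lemma mem_conj_rel_iff:
  "(x, y) \<in> Q' j \<longleftrightarrow> x \<noteq> 0 \<and> ((x, y) \<in> Q1 j \<or> (x, y) \<in> Q2 j)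
     \<or> x = 0 \<and> (y \<in> D1 \<union> D2 \<and> (0, y) \<in> Q1 j \<union> Q2 j
                \<or> y = -1 \<and> \<not> (\<exists>k \<in> D1 \<union> D2. (0, k) \<in> Q1 j \<union> Q2 j))"
  by (auto simp: conj_rel_def M1.mem_under_iff M2.mem_under_iff)

lemma conj_shape: "U_shape (T1 \<union> T2) (D1 \<union> D2) Q'"
proof unfold_locales
  fix j x y
  show "(x, y) \<in> Q' j \<Longrightarrow> x \<in> W' \<and> y \<in> W'"
    using M1.edges_within[of x y j] M2.edges_within[of x y j]
    by (auto simp: mem_conj_rel_iff evs_def)
  show "(-1, y) \<in> Q' j \<longleftrightarrow> y = -1"
    using M1.sink_iff M2.sink_iff by (auto simp: mem_conj_rel_iff)
  have "\<exists>k \<in> D1 \<union> D2. (0, k) \<in> Q1 j \<union> Q2 j" if "j \<in> T1 \<union> T2"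
    using that by (metis M1.target_succ M1.target_succ_ex M2.target_succ M2.target_succ_ex Un_iff)
  then show "j \<in> T1 \<union> T2 \<Longrightarrow> \<exists>k. (0, k) \<in> Q' j"
    and "j \<in> T1 \<union> T2 \<Longrightarrow> (0, y) \<in> Q' j \<Longrightarrow> y \<in> D1 \<union> D2"
    by (auto simp: mem_conj_rel_iff)
  show "j \<notin> T1 \<union> T2 \<Longrightarrow> (0, y) \<in> Q' j \<longleftrightarrow> y = -1"
    using M1.nontarget_succ_iff M2.nontarget_succ_iff M1.sink_notin_D M2.sink_notin_D
    by (auto simp: mem_conj_rel_iff)
qed (use M1.positive M2.positive M1.no_edge_into_root M2.no_edge_into_root
      in \<open>auto simp: mem_conj_rel_iff\<close>)

sublocale extended: U_shape "T1 \<union> T2" "D1 \<union> D2" Q'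
  by (fact conj_shape)

lemma conj_rel_agree: "x \<in> evs D1 - {0} \<Longrightarrow> (x, y) \<in> Q' j \<longleftrightarrow> (x, y) \<in> Q1 j"
  using disjoint_events M1.positive M2.positive M1.sink_iff M2.sink_iff M2.edges_within[of x y j]
  by (auto simp: mem_conj_rel_iff evs_def)

lemma conj_root_succ:
  assumes "j \<notin> T2"
  shows "(0, v) \<in> Q' j \<longleftrightarrow> (0, v) \<in> Q1 j"
proof (cases "j \<in> T1")
  case True
  with assms show ?thesis
    using M1.target_succ_ex[OF True] M1.target_succ[OF True] M2.nontarget_succ_iff[OF assms]
      M1.sink_notin_D M2.sink_notin_D
    by (auto simp: mem_conj_rel_iff)
next
  case False
  with assms show ?thesis
    using M1.nontarget_succ_iff[OF False] M2.nontarget_succ_iff[OF assms]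
      M1.sink_notin_D M2.sink_notin_D
    by (auto simp: mem_conj_rel_iff)
qed

lemma reach_conj_Cons: "j \<notin> T2 \<Longrightarrow> reach W' Q' 0 (j # s) u \<longleftrightarrow> reach (evs D1) Q1 0 (j # s) u"
  by (rule M1.reach_extension_Cons) (auto simp: evs_def conj_rel_agree conj_root_succ)

lemma reach_conj_left:
  assumes "s = [] \<or> hd s \<notin> T2"
  shows "reach W' Q' 0 s u \<longleftrightarrow> reach (evs D1) Q1 0 s u"
proof (cases s)
  case (Cons j s')
  with assms reach_conj_Cons[of j s' u] show ?thesis by simp
qed simp

lemma swapped: "conj_extension T2 D2 Q2 T1 D1 Q1"
  using disjoint_events disjoint_targets by unfold_locales blast+

lemma reach_conj_iff:
  assumes "u \<noteq> -1"
  shows "reach W' Q' 0 s u \<longleftrightarrow> reach (evs D1) Q1 0 s u \<or> reach (evs D2) Q2 0 s u"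
proof (cases s)
  case (Cons j s')
  show ?thesis
  proof (cases "j \<in> T2")
    case True
    with disjoint_targets have "j \<notin> T1" by blast
    with Cons assms conj_extension.reach_conj_Cons[OF swapped] M1.reach_nontarget show ?thesis
      by (metis Un_commute conj_rel_commute)
  next
    case False
    with Cons assms reach_conj_Cons M2.reach_nontarget show ?thesis
      by metis
  qed
qed simp

end

lemma privatizing_model_Conj:
  assumes P1: "privatizing_model \<psi> D1 Q1" and P2: "privatizing_model \<theta> D2 Q2"
    and "D1 \<inter> D2 = {}" and "ta \<psi> \<inter> ta \<theta> = {}"
  shows "privatizing_model (Conj \<psi> \<theta>) (D1 \<union> D2) (conj_rel D1 Q1 D2 Q2)"
proof -
  interpret P1: privatizing_model \<psi> D1 Q1 by (fact P1)
  interpret P2: privatizing_model \<theta> D2 Q2 by (fact P2)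
  interpret conj_extension "ta \<psi>" D1 Q1 "ta \<theta>" D2 Q2
    using assms by unfold_locales
  interpret swapped: conj_extension "ta \<theta>" D2 Q2 "ta \<psi>" D1 Q1
    by (fact swapped)
  have reach_sym: "swapped.W' = W'" "swapped.Q' = Q'"
    by (simp_all add: Un_commute conj_rel_commute)
  have rootpath_left: "reach W' Q' 0 (agSeq \<sigma>) u \<longleftrightarrow> reach (evs D1) Q1 0 (agSeq \<sigma>) u"
    if "rootpath (mtree \<psi>) \<sigma>" for \<sigma> u
    using rootpath_mtree_hd[OF that] assms(4) by (intro reach_conj_left) blast
  have rootpath_right: "reach W' Q' 0 (agSeq \<sigma>) u \<longleftrightarrow> reach (evs D2) Q2 0 (agSeq \<sigma>) u"
    if "rootpath (mtree \<theta>) \<sigma>" for \<sigma> u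
    using rootpath_mtree_hd[OF that] assms(4) swapped.reach_conj_left unfolding reach_sym by blast
  show ?thesis
  proof (intro privatizing_model.intro privatizing_model_axioms.intro)
    show "U_shape (ta (Conj \<psi> \<theta>)) (D1 \<union> D2) Q'"
      using conj_shape by simp
  next
    fix \<sigma>
    assume "rootpath (mtree (Conj \<psi> \<theta>)) \<sigma>"
    then have "rootpath (mtree \<psi>) \<sigma> \<or> rootpath (mtree \<theta>) \<sigma>"
      by (simp add: rootpath_append_iff)
    then show "\<exists>u. reach W' Q' 0 (agSeq \<sigma>) u"
      and "\<And>u. reach W' Q' 0 (agSeq \<sigma>) u \<Longrightarrow> u \<noteq> -1"
      using rootpath_left rootpath_right P1.rootpath_reach P2.rootpath_reach
        P1.rootpath_avoids_sink P2.rootpath_avoids_sink by blast+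
  next
    fix s t u
    assume s: "distinct_adj s" "reach W' Q' 0 s u" and t: "distinct_adj t" "reach W' Q' 0 t u"
      and "u \<noteq> -1"
    show "s = t"
    proof (cases "u = 0")
      case True
      with s t show ?thesis by (simp add: extended.reach_root_iff)
    next
      case False
      with \<open>u \<noteq> -1\<close> \<open>D1 \<inter> D2 = {}\<close> have "u \<notin> evs D1 \<inter> evs D2"
        by (auto simp: evs_def)
      then consider "reach (evs D1) Q1 0 s u" "reach (evs D1) Q1 0 t u"
        | "reach (evs D2) Q2 0 s u" "reach (evs D2) Q2 0 t u"
        using s(2) t(2) reach_conj_iff[OF \<open>u \<noteq> -1\<close>] P1.reach_in_evs P2.reach_in_evs by blast
      then show ?thesis
        using s(1) t(1) \<open>u \<noteq> -1\<close> P1.distinct_adj_unique P2.distinct_adj_unique by cases blast+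
    qed
  qed
qed

text \<open>A model of \<open>\<psi>\<close> excludes \<open>\<psi> = \<xi> \<and> \<phi>\<close> with propositional \<open>\<xi>\<close>, which is DBI normal only
  when read as \<open>B\<^sub>i(\<xi> \<and> \<phi>)\<close>.\<close>

lemma dbi_normal_BelD:
  assumes "dbi_normal (Bel i \<psi>)" and "U_model \<psi> D Q pre"
  shows "dbi_normal \<psi> \<and> i \<notin> ta \<psi>"
  using assms(1)
proof cases
  case bel_prop
  with assms(2) show ?thesis by (blast dest: U_model_not_propositional)
next
  case (bel_conj \<xi> \<phi>)
  with assms(2) show ?thesis
    by (auto elim: U_model.cases dest: U_model_not_propositional)
qed simp

lemma dbi_normal_Bel_ConjD:
  assumes "dbi_normal (Bel i (Conj \<xi> \<psi>))" and "propositional \<xi>" and "U_model \<psi> D Q pre"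
  shows "dbi_normal \<psi> \<and> i \<notin> ta \<psi>"
  using assms(1)
proof cases
  case bel_prop
  with assms(3) show ?thesis by (auto dest: U_model_not_propositional)
next
  case bel
  with assms(2) show ?thesis by (auto elim: dbi_normal.cases dest: dbi_normal_not_propositional)
qed simp

lemma privatizing_model_Bel:
  assumes "privatizing_model \<psi> D Q" and "i \<notin> ta \<psi>" and "1 \<le> m" and "m \<notin> D"
  shows "privatizing_model (Bel i \<psi>) (insert m D) (bel_rel i D Q m)"
  using assms
  by (intro bel_extension.bel_privatizing) (simp add: bel_extension_def bel_extension_axioms_def)

lemma U_model_privatizing_model: "U_model \<phi> D Q pre \<Longrightarrow> dbi_normal \<phi> \<Longrightarrow> privatizing_model \<phi> D Q"
proof (induction rule: U_model.induct)
  case (base \<xi> m i)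
  \<comment> \<open>rule \<open>base\<close> is rule \<open>bel\<close> applied to the model \<open>sink_rel\<close> of \<open>\<xi>\<close>\<close>
  have "privatizing_model (Bel i \<xi>) (insert m {}) (bel_rel i {} sink_rel m)"
  proof (rule privatizing_model_Bel)
    show "privatizing_model \<xi> {} sink_rel"
      using base.hyps(1) by (rule privatizing_model_propositional)
    show "i \<notin> ta \<xi>"
      using base.hyps(1) by (simp add: propositional_ta)
  qed (use base.hyps(2) in simp_all)
  moreover have "bel_rel i {} sink_rel m =
      (\<lambda>j. if j = i then {(0, m), (m, m), (-1, -1)} else {(0, -1), (m, -1), (-1, -1)})"
    by (auto simp: bel_rel_def sink_rel_def under_def evs_def fun_eq_iff)
  ultimately show ?case by simp
next
  case (bel \<psi> D Q pre m i)
  from bel.prems bel.hyps(1) have "dbi_normal \<psi>" and "i \<notin> ta \<psi>"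
    by (blast dest: dbi_normal_BelD)+
  with bel.IH bel.hyps(2,3) have "privatizing_model (Bel i \<psi>) (insert m D) (bel_rel i D Q m)"
    by (intro privatizing_model_Bel)
  then show ?case
    by (simp only: bel_rel_def)
next
  case (bel_conj \<xi> \<psi> D Q pre m i)
  from bel_conj.prems bel_conj.hyps(1,2) have "dbi_normal \<psi>" and "i \<notin> ta \<psi>"
    by (blast dest: dbi_normal_Bel_ConjD)+
  with bel_conj.IH bel_conj.hyps(3,4)
  have "privatizing_model (Bel i \<psi>) (insert m D) (bel_rel i D Q m)"
    by (intro privatizing_model_Bel)
  moreover have "privatizing_model (Bel i (Conj \<xi> \<psi>)) = privatizing_model (Bel i \<psi>)"
    using bel_conj.hyps(1)
    by (intro ext privatizing_model_cong) (simp_all add: propositional_mtree propositional_ta)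
  ultimately show ?case
    by (simp add: bel_rel_def)
next
  case (conj \<psi> D1 Q1 pre1 \<theta> D2 Q2 pre2)
  from conj.prems have "dbi_normal \<psi>" "dbi_normal \<theta>" "ta \<psi> \<inter> ta \<theta> = {}"
    by (auto elim: dbi_normal.cases)
  with conj.IH conj.hyps(3)
  have "privatizing_model (Conj \<psi> \<theta>) (D1 \<union> D2) (conj_rel D1 Q1 D2 Q2)"
    by (intro privatizing_model_Conj)
  then show ?case
    by (simp only: conj_rel_def)
qed

theorem theorem8:
  fixes n :: nat and \<phi> :: "'p fm" and D :: "int set"
    and Q :: "nat \<Rightarrow> (int \<times> int) set" and pre :: "int \<Rightarrow> 'p fm"
  assumes "n > 1"
    and "agents_of \<phi> \<subseteq> {1..n}"
    and "dbi_normal \<phi>"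
    and "U_model \<phi> D Q pre"
  shows "privatized n (evs D) Q 0 \<phi>"
proof -
  interpret privatizing_model \<phi> D Q
    using U_model_privatizing_model assms(3,4) by blast
  show ?thesis
    unfolding privatized_def RootP_def cluster_def
  proof (intro ballI allI impI conjI)
    fix \<sigma>
    assume "\<sigma> \<in> {\<sigma>. rootpath (mtree \<phi>) \<sigma>}"
    then have \<sigma>: "rootpath (mtree \<phi>) \<sigma>" by simp
    then show "{u \<in> evs D. reach (evs D) Q 0 (agSeq \<sigma>) u} \<noteq> {}"
      using rootpath_reach reach_in_evs by blast
    fix s
    assume "nsr n s \<and> s \<noteq> agSeq \<sigma>"
    then show "{u \<in> evs D. reach (evs D) Q 0 (agSeq \<sigma>) u} \<inter> {u \<in> evs D. reach (evs D) Q 0 s u} = {}"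
      using \<sigma> rootpath_avoids_sink distinct_adj_unique nsr_distinct_adj
        dbi_normal_rootpath_distinct_adj[OF assms(3)] by blast
  qed
qed

end
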